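(* Let $\mathcal{P}$ be a partition of $\{1,\dots,n\}$ and $\mathcal{U}$ a subspace of $\mathbb{R}^n$. If $\mathcal{U}$ is $\mathcal{P}$-realizable then every element of $\mathcal{U}$ is $\mathcal{P}$-balanced. If $\mathcal{U}=\operatorname{span}\{u\}$ is one-dimensional, then $\mathcal{U}$ is $\mathcal{P}$-realizable if and only if $u$ is $\mathcal{P}$-balanced.
   Context: For $u\in\mathbb{R}^n$ and $\mathcal{I}\subseteq\{1,\dots,n\}$, $u_{\mathcal{I}}$ is the subvector of $u$ indexed by $\mathcal{I}$. $u$ is $\mathcal{P}$-balanced if $\|u_{\mathcal{I}}\|_2\le\sum_{\mathcal{J}\in\mathcal{P}\setminus\{\mathcal{I}\}}\|u_{\mathcal{J}}\|_2$ for all $\mathcal{I}\in\mathcal{P}$. $\mathcal{E}_{\mathcal{P}}=\{Y\succeq0: Y_{\mathcal{I}}=I\text{ for all }\mathcal{I}\in\mathcal{P}\}$; $\mathcal{U}$ is $\mathcal{P}$-realizable if some $Y\in\mathcal{E}_{\mathcal{P}}$ has nullspace containing $\mathcal{U}$. *)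

theory Defs
  imports "HOL-Analysis.Analysis" "HOL-Library.Disjoint_Sets"
begin

text \<open>Vectors in R^n are real^'n for a finite index type 'n; a partition of {1..n}
is a partition (partition_on) of UNIV :: 'n set.\<close>

definition sub_norm :: "real^'n \<Rightarrow> 'n set \<Rightarrow> real" where
  "sub_norm u I = sqrt (\<Sum>i\<in>I. (u $ i)^2)"

definition P_balanced :: "'n::finite set set \<Rightarrow> real^'n \<Rightarrow> bool" where
  "P_balanced P u \<longleftrightarrow> (\<forall>I\<in>P. sub_norm u I \<le> (\<Sum>J\<in>P - {I}. sub_norm u J))"

definition psd :: "real^'n^'n \<Rightarrow> bool" where
  "psd Y \<longleftrightarrow> transpose Y = Y \<and> (\<forall>x. 0 \<le> x \<bullet> (Y *v x))"

definition E_P :: "'n::finite set set \<Rightarrow> (real^'n^'n) set" where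
  "E_P P = {Y. psd Y \<and> (\<forall>I\<in>P. \<forall>i\<in>I. \<forall>j\<in>I. Y $ i $ j = (if i = j then 1 else 0))}"

definition P_realizable :: "'n::finite set set \<Rightarrow> (real^'n) set \<Rightarrow> bool" where
  "P_realizable P U \<longleftrightarrow> (\<exists>Y\<in>E_P P. U \<subseteq> {x. Y *v x = 0})"

end

theory Submission
  imports Defs
begin

text \<open>Necessity: write \<open>u\<close> as the sum of its block restrictions \<open>u_J\<close>. Since \<open>Y\<close> is the identity
on every diagonal block, \<open>u_I' Y u_I = |u_I|^2\<close>; hence \<open>Y u = 0\<close> gives
\<open>|u_I|^2 = - (\<Sum>J \<noteq> I. u_I' Y u_J) \<le> |u_I| (\<Sum>J \<noteq> I. |u_J|)\<close> by the Cauchy-Schwarz inequality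
for the positive semidefinite form of \<open>Y\<close>.

Sufficiency: balanced block norms \<open>a_J = |u_J|\<close> are the side lengths of a closed polygon in the
plane, i.e. there are unit complex numbers \<open>w_J\<close> with \<open>\<Sum>J. a_J w_J = 0\<close>. With \<open>c = u_J / a_J\<close> on
block \<open>J\<close>, the Gram matrix of the vectors \<open>g_i = (c_i w_J, e_i - c_i c_J)\<close> (\<open>i \<in> J\<close>) in
\<open>\<complex> \<times> \<real>^n\<close> is positive semidefinite, is the identity on every diagonal block, and annihilates \<open>u\<close>
because \<open>\<Sum>i. u_i g_i = 0\<close>.\<close>

lemma exists_signs_abs_sum_le:
  fixes a :: "'a \<Rightarrow> real"
  assumes "finite F" and "\<forall>j\<in>F. 0 \<le> a j \<and> a j \<le> M" and "0 \<le> M"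
  shows "\<exists>s. (\<forall>j. s j = 1 \<or> s j = -1) \<and> \<bar>\<Sum>j\<in>F. s j * a j\<bar> \<le> M"
  using assms
proof (induction F rule: finite_induct)
  case empty
  then show ?case by (intro exI[of _ "\<lambda>_. 1"]) auto
next
  case (insert x F)
  then obtain s where s: "\<forall>j. s j = 1 \<or> s j = -1" "\<bar>\<Sum>j\<in>F. s j * a j\<bar> \<le> M"
    by auto
  define \<sigma> where "\<sigma> = (\<Sum>j\<in>F. s j * a j)"
  define s' where "s' = s(x := (if \<sigma> \<ge> 0 then -1 else 1))"
  have "(\<Sum>j\<in>F. s' j * a j) = \<sigma>"
    unfolding \<sigma>_def s'_def using insert.hyps(2) by (intro sum.cong) auto
  then have "(\<Sum>j\<in>insert x F. s' j * a j) = s' x * a x + \<sigma>"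
    using insert.hyps by simp
  moreover have "\<bar>s' x * a x + \<sigma>\<bar> \<le> M"
    using s(2) insert.prems unfolding \<sigma>_def[symmetric] s'_def by auto
  moreover have "\<forall>j. s' j = 1 \<or> s' j = -1"
    using s(1) unfolding s'_def by auto
  ultimately show ?case by metis
qed

lemma ellipse_attains_intermediate_norm:
  fixes r A S :: real
  assumes "\<bar>r\<bar> \<le> A" and "A \<le> S"
  shows "\<exists>p q. p\<^sup>2 + q\<^sup>2 = 1 \<and> (r * p)\<^sup>2 + (S * q)\<^sup>2 = A\<^sup>2"
proof -
  define t where "t = (A\<^sup>2 - r\<^sup>2) / (S\<^sup>2 - r\<^sup>2)"
  have r2: "r\<^sup>2 \<le> A\<^sup>2"
    using assms(1) by (metis abs_ge_zero abs_le_square_iff abs_of_nonneg order_trans)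
  have S2: "A\<^sup>2 \<le> S\<^sup>2"
    using assms by (intro power_mono) auto
  have t0: "0 \<le> t" and t1: "t \<le> 1"
    unfolding t_def using r2 S2 by (auto intro: divide_nonneg_nonneg simp: divide_le_eq_1)
  have "r\<^sup>2 * (1 - t) + S\<^sup>2 * t = A\<^sup>2"
  proof (cases "S\<^sup>2 = r\<^sup>2")
    case True
    then show ?thesis unfolding t_def using r2 S2 by simp
  next
    case False
    then have "(S\<^sup>2 - r\<^sup>2) * t = A\<^sup>2 - r\<^sup>2"
      unfolding t_def by simp
    then show ?thesis by (simp add: algebra_simps)
  qed
  then show ?thesis
    using t0 t1 by (intro exI[of _ "sqrt (1 - t)"] exI[of _ "sqrt t"]) (simp add: power_mult_distrib)
qed

lemma closed_polygon_of_balanced: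
  fixes a :: "'a \<Rightarrow> real"
  assumes fin: "finite P" and nonneg: "\<forall>J\<in>P. 0 \<le> a J"
    and bal: "\<forall>I\<in>P. a I \<le> (\<Sum>J\<in>P - {I}. a J)"
  shows "\<exists>w. (\<forall>J\<in>P. cmod (w J) = 1) \<and> (\<Sum>J\<in>P. a J *\<^sub>R w J) = 0"
proof (cases "\<forall>J\<in>P. a J = 0")
  case True
  then show ?thesis by (intro exI[of _ "\<lambda>_. 1"]) simp
next
  case False
  then have "P \<noteq> {}" by auto
  then have "Max (a ` P) \<in> a ` P"
    using fin by simp
  then obtain I where I: "I \<in> P" "a I = Max (a ` P)"
    by auto
  then have max: "\<forall>J\<in>P. a J \<le> a I"
    using fin by simp
  then have aI: "0 < a I"
    using False nonneg by force
  define F where "F = P - {I}"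
  have finF: "finite F" and P_eq: "P = insert I F" and "I \<notin> F"
    using fin I(1) unfolding F_def by auto
  obtain s where s: "\<forall>j. s j = 1 \<or> s j = -1" "\<bar>\<Sum>j\<in>F. s j * a j\<bar> \<le> a I"
    using exists_signs_abs_sum_le[OF finF, of a "a I"] nonneg max aI unfolding F_def by auto
  define r where "r = (\<Sum>j\<in>F. s j * a j)"
  define S where "S = (\<Sum>j\<in>F. a j)"
  obtain p q where pq: "p\<^sup>2 + q\<^sup>2 = 1" "(r * p)\<^sup>2 + (S * q)\<^sup>2 = (a I)\<^sup>2"
    using ellipse_attains_intermediate_norm[of r "a I" S] s(2) bal I(1) unfolding r_def S_def F_def by auto
  \<comment> \<open>the sides other than the longest one \<open>I\<close> get directions \<open>(\<plusminus>p, q)\<close>, tilted so that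
     they add up to a vector \<open>z\<close> of length \<open>a I\<close>, which side \<open>I\<close> then cancels\<close>
  define z where "z = (\<Sum>j\<in>F. a j *\<^sub>R Complex (s j * p) q)"
  have "z = Complex (r * p) (S * q)"
    unfolding z_def r_def S_def
    by (rule complex_eqI) (simp_all add: Re_sum Im_sum sum_distrib_left sum_distrib_right mult_ac)
  then have cmod_z: "cmod z = a I"
    using pq(2) aI by (simp add: cmod_def)
  define w where "w J = (if J = I then - z / of_real (a I) else Complex (s J * p) q)" for J
  have "cmod (w J) = 1" if "J \<in> P" for J
  proof (cases "J = I")
    case True
    then show ?thesis using cmod_z aI by (simp add: w_def norm_divide)
  next
    case False
    have "(s J * p)\<^sup>2 + q\<^sup>2 = 1"
      using s(1) pq(1) by (metis mult_1 mult_minus1 power2_minus)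
    then show ?thesis using False by (simp add: w_def cmod_def)
  qed
  moreover have "(\<Sum>J\<in>P. a J *\<^sub>R w J) = 0"
  proof -
    have "(\<Sum>J\<in>F. a J *\<^sub>R w J) = z"
      unfolding z_def w_def F_def by (intro sum.cong) auto
    moreover have "a I *\<^sub>R w I = - z"
      using aI by (simp add: w_def scaleR_conv_of_real)
    ultimately show ?thesis
      using finF \<open>I \<notin> F\<close> by (simp add: P_eq)
  qed
  ultimately show ?thesis by blast
qed

lemma psd_inner_commute:
  fixes Y :: "real^'n^'n"
  assumes "psd Y"
  shows "x \<bullet> (Y *v y) = y \<bullet> (Y *v x)"
proof -
  have "x \<bullet> (Y *v y) = (x v* Y) \<bullet> y"
    by (simp add: dot_lmul_matrix)
  also have "x v* Y = transpose Y *v x"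
    by simp
  also have "transpose Y = Y"
    using assms by (simp add: psd_def)
  finally show ?thesis
    by (simp add: inner_commute)
qed

lemma psd_cauchy_schwarz:
  fixes Y :: "real^'n^'n"
  assumes "psd Y"
  shows "(x \<bullet> (Y *v y))\<^sup>2 \<le> (x \<bullet> (Y *v x)) * (y \<bullet> (Y *v y))"
proof -
  define a where "a = x \<bullet> (Y *v x)"
  define b where "b = x \<bullet> (Y *v y)"
  define c where "c = y \<bullet> (Y *v y)"
  have quadratic: "0 \<le> a + 2 * t * b + t\<^sup>2 * c" for t
  proof -
    have "(x + t *\<^sub>R y) \<bullet> (Y *v (x + t *\<^sub>R y)) = a + 2 * t * b + t\<^sup>2 * c"
      using psd_inner_commute[OF assms, of y x]
      by (simp add: a_def b_def c_def matrix_vector_right_distrib matrix_vector_mult_scaleR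
          inner_add_left inner_add_right algebra_simps power2_eq_square)
    then show ?thesis
      using assms unfolding psd_def by metis
  qed
  show ?thesis
  proof (cases "c = 0")
    case True
    have "b = 0"
    proof (rule ccontr)
      assume "b \<noteq> 0"
      then show False
        using quadratic[of "- (a + 1) / (2 * b)"] True by (simp add: field_simps)
    qed
    then show ?thesis using True by (simp add: a_def b_def c_def)
  next
    case False
    then have "0 < c"
      using assms unfolding psd_def c_def by (metis order_le_less)
    then have "b\<^sup>2 \<le> a * c"
      using quadratic[of "- b / c"] by (simp add: field_simps power2_eq_square)
    then show ?thesis by (simp add: a_def b_def c_def)
  qed
qed

definition block_of :: "'a set set \<Rightarrow> 'a \<Rightarrow> 'a set" where
  "block_of P i = (THE J. J \<in> P \<and> i \<in> J)"

lemma block_of_eq: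
  assumes "partition_on A P" and "J \<in> P" and "i \<in> J"
  shows "block_of P i = J"
  unfolding block_of_def
proof (rule the_equality)
  show "J \<in> P \<and> i \<in> J" using assms by simp
  show "K = J" if "K \<in> P \<and> i \<in> K" for K
    using that assms partition_onD2[OF assms(1)] by (auto simp: disjoint_def)
qed

definition restrict_vec :: "'a^'n \<Rightarrow> 'n set \<Rightarrow> 'a::zero^'n" where
  "restrict_vec u J = (\<chi> i. if i \<in> J then u $ i else 0)"

lemma restrict_vec_nth [simp]: "restrict_vec u J $ i = (if i \<in> J then u $ i else 0)"
  by (simp add: restrict_vec_def)

lemma sum_restrict_vec_partition:
  assumes "partition_on UNIV P"
  shows "(\<Sum>J\<in>P. restrict_vec u J) = (u :: 'a::comm_monoid_add^'n::finite)"
proof -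
  have "(\<Sum>J\<in>P. restrict_vec u J) $ i = u $ i" for i
  proof -
    have "(\<Sum>J\<in>P. restrict_vec u J) $ i = (\<Sum>J\<in>P. if i \<in> J then u $ i else 0)"
      by (simp add: sum_component)
    also have "\<dots> = (\<Sum>J\<in>P. \<Sum>j\<in>J. if j = i then u $ i else 0)"
      by (intro sum.cong) simp_all
    also have "\<dots> = (\<Sum>j\<in>UNIV. if j = i then u $ i else 0)"
      by (rule sum.partition[OF finite assms, symmetric])
    finally show ?thesis by simp
  qed
  then show ?thesis by (simp add: vec_eq_iff)
qed

lemma sub_norm_nonneg: "0 \<le> sub_norm u J"
  by (simp add: sub_norm_def sum_nonneg)

lemma sub_norm_power2: "(sub_norm u J)\<^sup>2 = (\<Sum>i\<in>J. (u $ i)\<^sup>2)"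
  by (simp add: sub_norm_def sum_nonneg)

lemma inner_restrict_vec_self: "restrict_vec u J \<bullet> restrict_vec u J = (sub_norm u J)\<^sup>2"
  unfolding sub_norm_power2
  by (simp add: inner_vec_def if_distrib sum.If_cases power2_eq_square cong: if_cong)

lemma restrict_vec_quadratic_form:
  fixes Y :: "real^'n::finite^'n"
  assumes "\<forall>i\<in>J. \<forall>j\<in>J. Y $ i $ j = (if i = j then 1 else 0)"
  shows "restrict_vec u J \<bullet> (Y *v restrict_vec u J) = (sub_norm u J)\<^sup>2"
proof -
  have "(Y *v restrict_vec u J) $ i = u $ i" if "i \<in> J" for i
  proof -
    have "(Y *v restrict_vec u J) $ i = (\<Sum>j\<in>J. Y $ i $ j * u $ j)"
      by (simp add: matrix_vector_mult_def if_distrib sum.If_cases cong: if_cong)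
    also have "\<dots> = (\<Sum>j\<in>J. if i = j then u $ j else 0)"
      using assms that by (intro sum.cong) auto
    finally show ?thesis using that by simp
  qed
  then have "restrict_vec u J \<bullet> (Y *v restrict_vec u J) = restrict_vec u J \<bullet> restrict_vec u J"
    unfolding inner_vec_def by (intro sum.cong) auto
  then show ?thesis by (simp add: inner_restrict_vec_self)
qed

lemma P_balanced_of_null_vector:
  fixes Y :: "real^'n::finite^'n"
  assumes part: "partition_on UNIV P" and Y: "Y \<in> E_P P" and null: "Y *v u = 0"
  shows "P_balanced P u"
  unfolding P_balanced_def
proof
  fix I assume I: "I \<in> P"
  have psd: "psd Y" and fin: "finite P"
    using Y finite_elements[OF finite part] by (simp_all add: E_P_def)
  have quad: "restrict_vec u J \<bullet> (Y *v restrict_vec u J) = (sub_norm u J)\<^sup>2" if "J \<in> P" for J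
    using Y that unfolding E_P_def by (intro restrict_vec_quadratic_form) auto
  define cross where "cross J = restrict_vec u I \<bullet> (Y *v restrict_vec u J)" for J
  have cross_le: "- cross J \<le> sub_norm u I * sub_norm u J" if "J \<in> P" for J
  proof -
    have "(cross J)\<^sup>2 \<le> (sub_norm u I * sub_norm u J)\<^sup>2"
      using psd_cauchy_schwarz[OF psd, of "restrict_vec u I" "restrict_vec u J"] quad[OF I] quad[OF that]
      by (simp add: cross_def power_mult_distrib)
    then show ?thesis
      by (metis abs_le_square_iff abs_le_D2 abs_of_nonneg mult_nonneg_nonneg sub_norm_nonneg)
  qed
  have "0 = restrict_vec u I \<bullet> (Y *v (\<Sum>J\<in>P. restrict_vec u J))"
    using null by (simp add: sum_restrict_vec_partition[OF part])
  also have "\<dots> = (\<Sum>J\<in>P. cross J)"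
    by (simp add: cross_def linear_sum[OF matrix_vector_mul_linear] inner_sum_right)
  also have "\<dots> = (sub_norm u I)\<^sup>2 + (\<Sum>J\<in>P - {I}. cross J)"
    using fin I quad[OF I] by (simp add: cross_def sum.remove)
  finally have "(sub_norm u I)\<^sup>2 = (\<Sum>J\<in>P - {I}. - cross J)"
    by (simp add: sum_negf)
  also have "\<dots> \<le> sub_norm u I * (\<Sum>J\<in>P - {I}. sub_norm u J)"
    unfolding sum_distrib_left using cross_le by (intro sum_mono) auto
  finally show "sub_norm u I \<le> (\<Sum>J\<in>P - {I}. sub_norm u J)"
    using sub_norm_nonneg[of u I]
    by (cases "sub_norm u I = 0") (auto simp: power2_eq_square sum_nonneg sub_norm_nonneg)
qed

definition gram_matrix :: "('n::finite \<Rightarrow> 'a::real_inner) \<Rightarrow> real^'n^'n" where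
  "gram_matrix g = (\<chi> i j. g i \<bullet> g j)"

lemma gram_matrix_mult_vec: "gram_matrix g *v x = (\<chi> i. g i \<bullet> (\<Sum>j\<in>UNIV. x $ j *\<^sub>R g j))"
  by (simp add: vec_eq_iff gram_matrix_def matrix_vector_mult_def inner_sum_right mult_ac)

lemma psd_gram_matrix: "psd (gram_matrix g)"
  unfolding psd_def
proof
  show "transpose (gram_matrix g) = gram_matrix g"
    by (simp add: gram_matrix_def transpose_def vec_eq_iff inner_commute)
  have "x \<bullet> (gram_matrix g *v x) = (\<Sum>i\<in>UNIV. x $ i *\<^sub>R g i) \<bullet> (\<Sum>j\<in>UNIV. x $ j *\<^sub>R g j)" for x
    by (simp add: gram_matrix_mult_vec inner_vec_def inner_sum_left)
  then show "\<forall>x. 0 \<le> x \<bullet> (gram_matrix g *v x)"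
    by simp
qed

lemma null_vector_of_balanced:
  fixes u :: "real^'n::finite"
  assumes part: "partition_on UNIV P" and bal: "P_balanced P u"
  shows "\<exists>Y\<in>E_P P. Y *v u = 0"
proof -
  have fin: "finite P"
    using finite_elements[OF finite part] .
  obtain w where w_unit: "\<forall>J\<in>P. cmod (w J) = 1"
    and w_closed: "(\<Sum>J\<in>P. sub_norm u J *\<^sub>R w J) = 0"
    using closed_polygon_of_balanced[OF fin, of "sub_norm u"] bal sub_norm_nonneg
    unfolding P_balanced_def by blast
  have block: "block_of P i = J" if "J \<in> P" "i \<in> J" for i J
    using block_of_eq[OF part that] .
  define c :: "real^'n" where "c = (\<chi> i. u $ i / sub_norm u (block_of P i))"
  define h :: "'n \<Rightarrow> real^'n" where "h i = axis i 1 - c $ i *\<^sub>R restrict_vec c (block_of P i)" for i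
  define g where "g i = (c $ i *\<^sub>R w (block_of P i), h i)" for i
  have c_block: "c $ i = u $ i / sub_norm u J" if "J \<in> P" "i \<in> J" for i J
    using block[OF that] by (simp add: c_def)
  have scaled_c: "sub_norm u J *\<^sub>R restrict_vec c J = restrict_vec u J" if J: "J \<in> P" for J
  proof -
    have "u $ i = 0" if "sub_norm u J = 0" "i \<in> J" for i
    proof -
      have "(u $ i)\<^sup>2 \<le> (sub_norm u J)\<^sup>2"
        unfolding sub_norm_power2 using \<open>i \<in> J\<close> by (intro member_le_sum) auto
      then show ?thesis using that by simp
    qed
    then show ?thesis
      using c_block[OF J] by (auto simp: vec_eq_iff)
  qed
  have c_weight: "(\<Sum>j\<in>J. u $ j * c $ j) = sub_norm u J" if J: "J \<in> P" for J
  proof -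
    have "(\<Sum>j\<in>J. u $ j * c $ j) = (\<Sum>j\<in>J. (u $ j)\<^sup>2) / sub_norm u J"
      using c_block[OF J] by (simp add: sum_divide_distrib power2_eq_square)
    also have "\<dots> = (sub_norm u J)\<^sup>2 / sub_norm u J"
      by (simp only: sub_norm_power2)
    finally show ?thesis
      by (simp add: power2_eq_square)
  qed
  have c_normalized: "c $ i * (sub_norm c J)\<^sup>2 = c $ i" if J: "J \<in> P" and "i \<in> J" for i J
  proof (cases "sub_norm u J = 0")
    case True
    then show ?thesis using c_block[OF that] by simp
  next
    case False
    have "(sub_norm c J)\<^sup>2 = (\<Sum>j\<in>J. (u $ j)\<^sup>2 / (sub_norm u J)\<^sup>2)"
      unfolding sub_norm_power2[of c] using c_block[OF J] by (intro sum.cong) (simp_all add: power_divide)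
    also have "\<dots> = (sub_norm u J)\<^sup>2 / (sub_norm u J)\<^sup>2"
      by (simp only: sum_divide_distrib[symmetric] sub_norm_power2)
    finally show ?thesis
      using False by simp
  qed
  have "gram_matrix g $ i $ j = (if i = j then 1 else 0)" if "I \<in> P" "i \<in> I" "j \<in> I" for I i j
  proof -
    have "h i \<bullet> h j = (if i = j then 1 else 0) - 2 * c $ i * c $ j + c $ i * c $ j * (sub_norm c I)\<^sup>2"
      using that block[OF that(1)]
      by (simp add: h_def inner_diff_left inner_diff_right inner_axis_axis inner_axis inner_axis'
          inner_restrict_vec_self)
         (simp add: axis_def algebra_simps)
    moreover have "(c $ i *\<^sub>R w I) \<bullet> (c $ j *\<^sub>R w I) = c $ i * c $ j"
      using w_unit that(1) by (simp add: power2_norm_eq_inner[symmetric])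
    ultimately have "gram_matrix g $ i $ j
        = (if i = j then 1 else 0) - c $ i * c $ j + c $ i * c $ j * (sub_norm c I)\<^sup>2"
      using that block[OF that(1)] by (simp add: gram_matrix_def g_def)
    moreover have "c $ i * c $ j * (sub_norm c I)\<^sup>2 = c $ i * c $ j"
      using c_normalized[OF that(1,2)] by (metis mult.assoc mult.commute)
    ultimately show ?thesis
      by simp
  qed
  then have "gram_matrix g \<in> E_P P"
    by (simp add: E_P_def psd_gram_matrix)
  moreover have "(\<Sum>j\<in>UNIV. u $ j *\<^sub>R g j) = 0"
  proof -
    have "(\<Sum>j\<in>UNIV. (u $ j * c $ j) *\<^sub>R w (block_of P j)) = (\<Sum>J\<in>P. sub_norm u J *\<^sub>R w J)"
      unfolding sum.partition[OF finite part]
      using block c_weight by (simp add: scaleR_sum_left[symmetric])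
    then have complex_part: "(\<Sum>j\<in>UNIV. (u $ j * c $ j) *\<^sub>R w (block_of P j)) = 0"
      using w_closed by simp
    have "(\<Sum>j\<in>UNIV. u $ j *\<^sub>R h j)
        = u - (\<Sum>J\<in>P. \<Sum>j\<in>J. (u $ j * c $ j) *\<^sub>R restrict_vec c (block_of P j))"
      using basis_expansion[of u]
      by (simp add: h_def scaleR_diff_right sum_subtractf scalar_mult_eq_scaleR sum.partition[OF finite part])
    also have "\<dots> = u - (\<Sum>J\<in>P. restrict_vec u J)"
      using block c_weight scaled_c by (simp add: scaleR_sum_left[symmetric])
    finally have real_part: "(\<Sum>j\<in>UNIV. u $ j *\<^sub>R h j) = 0"
      by (simp add: sum_restrict_vec_partition[OF part])
    show ?thesis
      using complex_part real_part by (simp add: g_def prod_eq_iff fst_sum snd_sum)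
  qed
  then have "gram_matrix g *v u = 0"
    by (simp add: gram_matrix_mult_vec vec_eq_iff)
  ultimately show ?thesis
    by blast
qed

theorem corollary5p10:
  fixes P :: "'n::finite set set" and U :: "(real^'n) set"
  assumes "partition_on (UNIV :: 'n set) P"
    and "subspace U"
  shows "(P_realizable P U \<longrightarrow> (\<forall>u\<in>U. P_balanced P u))
     \<and> (\<forall>u. u \<noteq> 0 \<and> U = span {u} \<longrightarrow> (P_realizable P U \<longleftrightarrow> P_balanced P u))"
proof -
  have balanced: "\<forall>u\<in>V. P_balanced P u" if "P_realizable P V" for V :: "(real^'n) set"
    using that P_balanced_of_null_vector[OF assms(1)] unfolding P_realizable_def by blast
  moreover have "P_realizable P U \<longleftrightarrow> P_balanced P u" if U: "U = span {u}" for u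
  proof
    assume "P_realizable P U"
    then show "P_balanced P u"
      using balanced U by (simp add: span_base)
  next
    assume "P_balanced P u"
    then obtain Y where Y: "Y \<in> E_P P" "Y *v u = 0"
      using null_vector_of_balanced[OF assms(1)] by blast
    have "subspace {x. Y *v x = 0}"
      by (simp add: subspace_def matrix_vector_right_distrib matrix_vector_mult_scaleR)
    then have "U \<subseteq> {x. Y *v x = 0}"
      using Y(2) U by (simp add: span_minimal)
    then show "P_realizable P U"
      using Y(1) by (auto simp: P_realizable_def)
  qed
  ultimately show ?thesis
    by blast
qed

end
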